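(* There exist instances of arbitrarily large size of scheduling a single job with a general DAG dependency graph such that the optimal makespan is $\Omega(\sqrt{\mu_j}(\Delta_j+T_j))$; that is, there is a constant $\kappa>0$ such that for arbitrarily large $\mu_j$ there is a single-job instance with $\mu_j$ coflows whose optimal makespan is at least $\kappa\sqrt{\mu_j}(\Delta_j+T_j)$.
   Context: Model. $m$ servers, each a sender and a receiver. A coflow is an $m\times m$ nonnegative integer matrix $(d_{sr})$ of unit packets from sender $s$ to receiver $r$. A job $j$ has $\mu_j$ coflows $\mathcal{D}^{(cj)}$ and a DAG $G_j$; edge $c_1\to c_2$ means no packet of $c_2$ is sent before all packets of $c_1$ are sent. Each slot, each sender sends at most one packet and each receiver receives at most one. The makespan of a feasible schedule is the end of its last used slot. Effective size of a coflow: $D=\max\{\max_s\sum_rd_{sr},\max_r\sum_sd_{sr}\}$. $\Delta_j$ is the effective size of $\sum_c\mathcal{D}^{(cj)}$; $T_j$ is the maximum over directed paths in $G_j$ of the sum of effective sizes of the coflows on the path. *)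

theory Defs
  imports Complex_Main
begin

text \<open>Servers are 0..m-1. A coflow is d :: nat => nat => nat (sender, receiver),
  only entries with s,r < m are meaningful. A job with mu coflows is
  D :: nat => nat => nat => nat (coflow index c < mu), with DAG E on {..<mu}.\<close>

definition eff_size :: "nat \<Rightarrow> (nat \<Rightarrow> nat \<Rightarrow> nat) \<Rightarrow> nat" where
  "eff_size m d = max (Max ({\<Sum>r<m. d s r | s. s < m} \<union> {0}))
                      (Max ({\<Sum>s<m. d s r | r. r < m} \<union> {0}))"

definition Delta :: "nat \<Rightarrow> nat \<Rightarrow> (nat \<Rightarrow> nat \<Rightarrow> nat \<Rightarrow> nat) \<Rightarrow> nat" where
  "Delta m mu D = eff_size m (\<lambda>s r. \<Sum>c<mu. D c s r)"

definition is_path :: "nat \<Rightarrow> (nat \<times> nat) set \<Rightarrow> nat list \<Rightarrow> bool" where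
  "is_path mu E p \<longleftrightarrow> p \<noteq> [] \<and> distinct p \<and> set p \<subseteq> {..<mu} \<and>
     (\<forall>i. Suc i < length p \<longrightarrow> (p ! i, p ! Suc i) \<in> E)"

definition T_len :: "nat \<Rightarrow> nat \<Rightarrow> (nat \<times> nat) set \<Rightarrow> (nat \<Rightarrow> nat \<Rightarrow> nat \<Rightarrow> nat) \<Rightarrow> nat" where
  "T_len m mu E D = Max ({\<Sum>c\<leftarrow>p. eff_size m (D c) | p. is_path mu E p} \<union> {0})"

definition valid_instance :: "nat \<Rightarrow> nat \<Rightarrow> (nat \<times> nat) set \<Rightarrow> (nat \<Rightarrow> nat \<Rightarrow> nat \<Rightarrow> nat) \<Rightarrow> bool" where
  "valid_instance m mu E D \<longleftrightarrow> E \<subseteq> {..<mu} \<times> {..<mu} \<and> acyclic E \<and>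
     (\<forall>c s r. (c \<ge> mu \<or> s \<ge> m \<or> r \<ge> m) \<longrightarrow> D c s r = 0) \<and>
     (\<forall>c<mu. eff_size m (D c) > 0)"

text \<open>A schedule x c s r t = number of packets of coflow c from s to r sent in slot t
  (slot t occupies the time interval [t, t+1)).\<close>
definition feasible :: "nat \<Rightarrow> nat \<Rightarrow> (nat \<times> nat) set \<Rightarrow> (nat \<Rightarrow> nat \<Rightarrow> nat \<Rightarrow> nat)
    \<Rightarrow> (nat \<Rightarrow> nat \<Rightarrow> nat \<Rightarrow> nat \<Rightarrow> nat) \<Rightarrow> bool" where
  "feasible m mu E D x \<longleftrightarrow>
     (\<exists>H. (\<forall>c s r t. t \<ge> H \<longrightarrow> x c s r t = 0) \<and>
          (\<forall>c<mu. \<forall>s<m. \<forall>r<m. (\<Sum>t<H. x c s r t) = D c s r)) \<and>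
     (\<forall>c s r t. (c \<ge> mu \<or> s \<ge> m \<or> r \<ge> m) \<longrightarrow> x c s r t = 0) \<and>
     (\<forall>t. \<forall>s<m. (\<Sum>c<mu. \<Sum>r<m. x c s r t) \<le> 1) \<and>
     (\<forall>t. \<forall>r<m. (\<Sum>c<mu. \<Sum>s<m. x c s r t) \<le> 1) \<and>
     (\<forall>(c1, c2) \<in> E. \<forall>s1 r1 t1 s2 r2 t2.
        x c1 s1 r1 t1 > 0 \<longrightarrow> x c2 s2 r2 t2 > 0 \<longrightarrow> t1 < t2)"

definition makespan :: "(nat \<Rightarrow> nat \<Rightarrow> nat \<Rightarrow> nat \<Rightarrow> nat) \<Rightarrow> nat" where
  "makespan x = Max ({Suc t | t. \<exists>c s r. x c s r t > 0} \<union> {0})"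

end

theory Submission
  imports Defs
begin

text \<open>Take k servers and k^2 single-packet coflows in k layers of k: coflow c lies in layer
  c div k and is a packet that server c div k sends to itself, and every coflow of a lower layer
  precedes every coflow of a higher one. Coflows of different layers are comparable, so they never
  share a slot, while those of one layer share a sender; hence every slot carries at most one
  packet and the makespan is at least k^2 = \<mu>. On the other hand every server carries k packets,
  so \<Delta> \<le> k, and a path meets each layer at most once, so T \<le> k. Thus
  sqrt \<mu> (\<Delta> + T) \<le> 2k^2.\<close>

lemma eff_size_le:
  assumes "\<forall>s<m. (\<Sum>r<m. d s r) \<le> B" and "\<forall>r<m. (\<Sum>s<m. d s r) \<le> B"
  shows "eff_size m d \<le> B"
proof -
  have "{\<Sum>r<m. d s r | s. s < m} = (\<lambda>s. \<Sum>r<m. d s r) ` {..<m}"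
    and "{\<Sum>s<m. d s r | r. r < m} = (\<lambda>r. \<Sum>s<m. d s r) ` {..<m}"
    by auto
  then show ?thesis
    unfolding eff_size_def using assms by (auto intro!: Max.boundedI)
qed

lemma entry_le_eff_size:
  assumes "s < m" and "r < m"
  shows "d s r \<le> eff_size m d"
proof -
  have "d s r \<le> (\<Sum>r<m. d s r)"
    using \<open>r < m\<close> by (intro member_le_sum) auto
  also have "\<dots> \<le> Max ({\<Sum>r<m. d s r | s. s < m} \<union> {0})"
    using \<open>s < m\<close> by (intro Max_ge) auto
  finally show ?thesis
    unfolding eff_size_def by linarith
qed

lemma sum_eq_single:
  fixes f :: "'a \<Rightarrow> 'b::comm_monoid_add"
  assumes "finite A" and "i \<in> A" and "\<forall>j\<in>A. j \<noteq> i \<longrightarrow> f j = 0"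
  shows "sum f A = f i"
  using sum.mono_neutral_right[of A "{i}" f] assms by auto

lemma eff_size_diagonal_le:
  assumes "\<forall>s r. s \<noteq> r \<longrightarrow> d s r = 0" and "\<forall>s<m. d s s \<le> B"
  shows "eff_size m d \<le> B"
proof (rule eff_size_le)
  have "(\<Sum>r<m. d s r) = d s s" "(\<Sum>r<m. d r s) = d s s" if "s < m" for s
    using that assms(1) by (auto intro: sum_eq_single)
  then show "\<forall>s<m. (\<Sum>r<m. d s r) \<le> B" and "\<forall>r<m. (\<Sum>s<m. d s r) \<le> B"
    using assms(2) by auto
qed

lemma T_len_le:
  assumes "\<And>p. is_path mu E p \<Longrightarrow> (\<Sum>c\<leftarrow>p. eff_size m (D c)) \<le> B"
  shows "T_len m mu E D \<le> B"
proof -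
  let ?S = "{\<Sum>c\<leftarrow>p. eff_size m (D c) | p. is_path mu E p} \<union> {0}"
  have "?S \<subseteq> {..B}"
    using assms by auto
  then show ?thesis
    unfolding T_len_def by (intro Max.boundedI) (auto dest: finite_subset)
qed

lemma active_slot_lt_makespan:
  assumes "\<forall>c s r t. H \<le> t \<longrightarrow> x c s r t = 0" and "0 < x c s r t"
  shows "t < makespan x"
proof -
  let ?S = "{Suc t | t. \<exists>c s r. x c s r t > 0} \<union> {0}"
  have "t' < H" if "0 < x c' s' r' t'" for c' s' r' t'
    using assms(1) that by (metis not_le less_irrefl)
  then have "?S \<subseteq> Suc ` {..<H} \<union> {0}"
    by blast
  then have "finite ?S"
    by (rule finite_subset) simp
  moreover have "Suc t \<in> ?S"
    using assms(2) by blast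
  ultimately have "Suc t \<le> Max ?S"
    by (rule Max_ge)
  then show ?thesis
    unfolding makespan_def by simp
qed

lemma feasible_horizonE:
  assumes "feasible m mu E D x"
  obtains H where "\<forall>c s r t. H \<le> t \<longrightarrow> x c s r t = 0"
    and "\<forall>c<mu. \<forall>s<m. \<forall>r<m. (\<Sum>t<H. x c s r t) = D c s r"
  using assms unfolding feasible_def by (elim conjE exE) (rule that)

lemma feasible_idle_after_makespan:
  assumes "feasible m mu E D x" and "makespan x \<le> t"
  shows "x c s r t = 0"
proof (rule ccontr)
  obtain H where "\<forall>c s r t. H \<le> t \<longrightarrow> x c s r t = 0"
    using feasible_horizonE[OF assms(1)] by metis
  moreover assume "x c s r t \<noteq> 0"
  then have "0 < x c s r t"
    by simp
  ultimately have "t < makespan x"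
    by (rule active_slot_lt_makespan)
  with assms(2) show False
    by simp
qed

lemma feasible_sum_upto_makespan:
  assumes "feasible m mu E D x" and "c < mu" "s < m" "r < m"
  shows "(\<Sum>t<makespan x. x c s r t) = D c s r"
proof -
  obtain H where idle: "\<forall>c s r t. H \<le> t \<longrightarrow> x c s r t = 0"
    and sent: "(\<Sum>t<H. x c s r t) = D c s r"
    using feasible_horizonE[OF assms(1)] assms(2-4) by metis
  let ?M = "max H (makespan x)"
  have "(\<Sum>t<?M. x c s r t) = (\<Sum>t<H. x c s r t)"
    using idle by (intro sum.mono_neutral_right) auto
  moreover have "(\<Sum>t<?M. x c s r t) = (\<Sum>t<makespan x. x c s r t)"
    using feasible_idle_after_makespan[OF assms(1)] by (intro sum.mono_neutral_right) auto
  ultimately show ?thesis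
    using sent by simp
qed

lemma feasible_active_imp_demand:
  assumes "feasible m mu E D x" and "0 < x c s r t"
  shows "c < mu \<and> s < m \<and> r < m \<and> 0 < D c s r"
proof -
  have range: "c < mu \<and> s < m \<and> r < m"
    using assms unfolding feasible_def by (metis not_le less_irrefl)
  have "t < makespan x"
    using feasible_idle_after_makespan[OF assms(1)] assms(2) by (metis not_le less_irrefl)
  then have "x c s r t \<le> (\<Sum>t<makespan x. x c s r t)"
    by (intro member_le_sum) auto
  then show ?thesis
    using range assms feasible_sum_upto_makespan by fastforce
qed

lemma feasible_precedence_exclusive:
  assumes "feasible m mu E D x" and "(c1, c2) \<in> E" and "0 < x c1 s1 r1 t"
  shows "x c2 s2 r2 t = 0"
  using assms unfolding feasible_def by blast

lemma total_demand_le_makespan: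
  assumes "feasible m mu E D x"
    and serial: "\<forall>t. (\<Sum>c<mu. \<Sum>s<m. \<Sum>r<m. x c s r t) \<le> 1"
  shows "(\<Sum>c<mu. \<Sum>s<m. \<Sum>r<m. D c s r) \<le> makespan x"
proof -
  let ?M = "makespan x"
  have "(\<Sum>c<mu. \<Sum>s<m. \<Sum>r<m. D c s r) = (\<Sum>c<mu. \<Sum>s<m. \<Sum>r<m. \<Sum>t<?M. x c s r t)"
    using feasible_sum_upto_makespan[OF assms(1)] by simp
  also have "\<dots> = (\<Sum>t<?M. \<Sum>c<mu. \<Sum>s<m. \<Sum>r<m. x c s r t)"
    by (simp only: sum.swap[of _ "{..<m}" "{..<?M}"] sum.swap[of _ "{..<mu}" "{..<?M}"])
  also have "\<dots> \<le> (\<Sum>t<?M. 1)"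
    using serial by (intro sum_mono) auto
  finally show ?thesis
    by simp
qed

definition layered_coflows :: "nat \<Rightarrow> nat \<Rightarrow> nat \<Rightarrow> nat \<Rightarrow> nat" where
  "layered_coflows k c s r = (if c < k * k \<and> s = c div k \<and> r = c div k then 1 else 0)"

definition layered_dag :: "nat \<Rightarrow> (nat \<times> nat) set" where
  "layered_dag k = {(c1, c2). c1 < k * k \<and> c2 < k * k \<and> c1 div k < c2 div k}"

lemma layer_less: "(c::nat) < k * k \<Longrightarrow> c div k < k"
  by (rule less_mult_imp_div_less)

lemma eff_size_layered_coflow:
  assumes "c < k * k"
  shows "eff_size k (layered_coflows k c) = 1"
proof (rule antisym)
  show "eff_size k (layered_coflows k c) \<le> 1"
    by (rule eff_size_diagonal_le) (auto simp: layered_coflows_def)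
  show "1 \<le> eff_size k (layered_coflows k c)"
    using entry_le_eff_size[of "c div k" k "c div k" "layered_coflows k c"] assms layer_less[OF assms]
    by (simp add: layered_coflows_def)
qed

lemma valid_layered_instance: "valid_instance k (k * k) (layered_dag k) (layered_coflows k)"
proof -
  have "wf (layered_dag k)"
    by (rule wf_subset[OF wf_inv_image[OF wf_less_than, of "\<lambda>c. c div k"]])
      (auto simp: layered_dag_def)
  then have "acyclic (layered_dag k)"
    by (rule wf_acyclic)
  moreover have "layered_dag k \<subseteq> {..<k * k} \<times> {..<k * k}"
    by (auto simp: layered_dag_def)
  moreover have "layered_coflows k c s r = 0" if "k * k \<le> c \<or> k \<le> s \<or> k \<le> r" for c s r
    using that layer_less[of c k] by (auto simp: layered_coflows_def)
  ultimately show ?thesis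
    unfolding valid_instance_def by (simp add: eff_size_layered_coflow)
qed

lemma card_layer_le: "card {c::nat. c < k * k \<and> c div k = i} \<le> k"
proof -
  have "{c. c < k * k \<and> c div k = i} \<subseteq> (\<lambda>j. i * k + j) ` {..<k}"
  proof
    fix c assume c: "c \<in> {c. c < k * k \<and> c div k = i}"
    then have "0 < k"
      by (cases "k = 0") auto
    then have "c mod k \<in> {..<k}"
      by simp
    moreover have "c = i * k + c mod k"
      using c div_mult_mod_eq[of c k] by simp
    ultimately show "c \<in> (\<lambda>j. i * k + j) ` {..<k}"
      by (intro image_eqI)
  qed
  then have "card {c. c < k * k \<and> c div k = i} \<le> card ((\<lambda>j. i * k + j) ` {..<k})"
    by (intro card_mono) simp_all
  also have "\<dots> \<le> k"
    using card_image_le[of "{..<k}" "\<lambda>j. i * k + j"] by simp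
  finally show ?thesis .
qed

lemma Delta_layered_le: "Delta k (k * k) (layered_coflows k) \<le> k"
  unfolding Delta_def
proof (rule eff_size_diagonal_le)
  show "\<forall>s r. s \<noteq> r \<longrightarrow> (\<Sum>c<k * k. layered_coflows k c s r) = 0"
    by (simp add: layered_coflows_def)
  have "(\<Sum>c<k * k. layered_coflows k c s s) = card {c. c < k * k \<and> c div k = s}" for s
    by (simp add: layered_coflows_def sum.If_cases Int_def eq_commute)
  then show "\<forall>s<k. (\<Sum>c<k * k. layered_coflows k c s s) \<le> k"
    using card_layer_le by simp
qed

lemma length_layered_path:
  assumes "is_path (k * k) (layered_dag k) p"
  shows "length p \<le> k"
proof -
  have climb: "p ! 0 div k + j \<le> p ! j div k" if "j < length p" for j
    using that
  proof (induction j)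
    case (Suc j)
    then have "(p ! j, p ! Suc j) \<in> layered_dag k"
      using assms unfolding is_path_def by blast
    with Suc show ?case
      by (auto simp: layered_dag_def)
  qed simp
  have "p \<noteq> []" and "set p \<subseteq> {..<k * k}"
    using assms unfolding is_path_def by auto
  then have "p ! (length p - 1) div k < k"
    using layer_less by (metis last_conv_nth last_in_set lessThan_iff subsetD)
  with climb[of "length p - 1"] \<open>p \<noteq> []\<close> show ?thesis
    by simp
qed

lemma T_len_layered_le: "T_len k (k * k) (layered_dag k) (layered_coflows k) \<le> k"
proof (rule T_len_le)
  fix p assume path: "is_path (k * k) (layered_dag k) p"
  then have "(\<Sum>c\<leftarrow>p. eff_size k (layered_coflows k c)) = (\<Sum>c\<leftarrow>p. 1)"
    unfolding is_path_def by (intro arg_cong[where f = sum_list] map_cong)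
      (auto simp: eff_size_layered_coflow)
  then show "(\<Sum>c\<leftarrow>p. eff_size k (layered_coflows k c)) \<le> k"
    using length_layered_path[OF path] by (simp add: sum_list_triv)
qed

lemma total_layered_demand:
  "(\<Sum>c<k * k. \<Sum>s<k. \<Sum>r<k. layered_coflows k c s r) = k * k"
proof -
  have "(\<Sum>s<k. \<Sum>r<k. layered_coflows k c s r) = 1" if c: "c < k * k" for c
  proof -
    have "(\<Sum>s<k. \<Sum>r<k. layered_coflows k c s r) = (\<Sum>r<k. layered_coflows k c (c div k) r)"
      using layer_less[OF c] by (intro sum_eq_single) (auto simp: layered_coflows_def)
    also have "\<dots> = layered_coflows k c (c div k) (c div k)"
      using layer_less[OF c] by (intro sum_eq_single) (auto simp: layered_coflows_def)
    finally show ?thesis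
      using c by (simp add: layered_coflows_def)
  qed
  then show ?thesis
    by simp
qed

lemma layered_slot_load_le_1:
  assumes feas: "feasible k (k * k) (layered_dag k) (layered_coflows k) x"
  shows "(\<Sum>c<k * k. \<Sum>s<k. \<Sum>r<k. x c s r t) \<le> 1"
proof (cases "\<exists>c s r. 0 < x c s r t")
  case False
  then show ?thesis
    by simp
next
  case True
  then obtain c0 s0 r0 where active0: "0 < x c0 s0 r0 t"
    by blast
  define i where "i = c0 div k"
  have active_sender: "s = i" if "0 < x c s r t" for c s r
  proof -
    have "c < k * k \<and> s = c div k" "c0 < k * k"
      using feasible_active_imp_demand[OF feas that] feasible_active_imp_demand[OF feas active0]
      by (auto simp: layered_coflows_def split: if_splits)
    moreover have "(c, c0) \<notin> layered_dag k" "(c0, c) \<notin> layered_dag k"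
      using feasible_precedence_exclusive[OF feas _ that] feasible_precedence_exclusive[OF feas _ active0]
        that active0 by auto
    ultimately show ?thesis
      unfolding i_def layered_dag_def by auto
  qed
  have "i < k"
    using feasible_active_imp_demand[OF feas active0] unfolding i_def by (simp add: layer_less)
  then have "(\<Sum>s<k. \<Sum>r<k. x c s r t) = (\<Sum>r<k. x c i r t)" for c
    using active_sender by (intro sum_eq_single) (auto intro: sum.neutral)
  then have "(\<Sum>c<k * k. \<Sum>s<k. \<Sum>r<k. x c s r t) = (\<Sum>c<k * k. \<Sum>r<k. x c i r t)"
    by simp
  also have "\<dots> \<le> 1"
    using feas \<open>i < k\<close> unfolding feasible_def by blast
  finally show ?thesis .
qed

lemma makespan_layered_ge:
  assumes "feasible k (k * k) (layered_dag k) (layered_coflows k) x"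
  shows "k * k \<le> makespan x"
  using total_demand_le_makespan[OF assms] layered_slot_load_le_1[OF assms]
  by (simp add: total_layered_demand)

theorem lemma2:
  shows "\<exists>\<kappa>::real. \<kappa> > 0 \<and>
    (\<forall>N::nat. \<exists>m mu E D. mu \<ge> N \<and> valid_instance m mu E D \<and>
       (\<forall>x. feasible m mu E D x \<longrightarrow>
          real (makespan x) \<ge> \<kappa> * sqrt (real mu) * real (Delta m mu D + T_len m mu E D)))"
proof (intro exI[of _ "1/2"] conjI allI)
  fix k :: nat
  let ?D = "layered_coflows k" and ?E = "layered_dag k"
  have "Delta k (k * k) ?D + T_len k (k * k) ?E ?D \<le> 2 * k"
    using Delta_layered_le[of k] T_len_layered_le[of k] by simp
  then have "real k * real (Delta k (k * k) ?D + T_len k (k * k) ?E ?D) \<le> real k * (2 * real k)"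
    by (intro mult_left_mono) simp_all
  then have "1/2 * sqrt (real (k * k)) * real (Delta k (k * k) ?D + T_len k (k * k) ?E ?D)
      \<le> real (k * k)"
    by (simp add: real_sqrt_mult)
  with makespan_layered_ge have "\<forall>x. feasible k (k * k) ?E ?D x \<longrightarrow>
      1/2 * sqrt (real (k * k)) * real (Delta k (k * k) ?D + T_len k (k * k) ?E ?D) \<le> real (makespan x)"
    by (meson of_nat_le_iff order_trans)
  moreover have "k \<le> k * k"
    by (rule le_square)
  ultimately show "\<exists>m mu E D. k \<le> mu \<and> valid_instance m mu E D \<and>
      (\<forall>x. feasible m mu E D x \<longrightarrow>
        1/2 * sqrt (real mu) * real (Delta m mu D + T_len m mu E D) \<le> real (makespan x))"
    using valid_layered_instance by blast
qed simp

end
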